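(* Let $A$ be a finitely generated $K$-algebra and $\mathcal{F}=\{V_n\}$ a filtration of $A$ with $\mathrm{h}_{\mathrm{alg}}(A,\mathcal{F})=0$. Then: (1) for any filtration $\mathcal{G}=\{W_n\}$ of $A$ with $W_n\subseteq V_n$ for all $n$, $\mathrm{h}_{\mathrm{alg}}(A,\mathcal{G})=0$; (2) for a fixed $k$, the filtration $\mathcal{G}=\{W_n\}$ with $W_n:=V_{nk}$ satisfies $\mathrm{h}_{\mathrm{alg}}(A,\mathcal{G})=0$; (3) for any filtration $\mathcal{G}=\{W_n\}$ of $A$ such that $W_1$ is finite-dimensional and $W_k=(W_1)^k$ for every $k$, one has $\mathrm{h}_{\mathrm{alg}}(A,\mathcal{G})=0$.
   Context: A filtration of a $K$-algebra $A$ is a family $\{V_n\}_{n\ge0}$ of subspaces with $0=V_0\subseteq V_1\subseteq\cdots$, $A=\bigcup_nV_n$ and $V_nV_m\subseteq V_{n+m}$; the quotients $V_n/V_{n-1}$ are assumed finite-dimensional. The algebraic entropy is $\mathrm{h}_{\mathrm{alg}}(A,\mathcal{F})=0$ if $A$ is finite-dimensional and otherwise $\limsup_{n\to\infty}\frac{\log\dim(V_n/V_{n-1})}{n}$. For a subspace $W$, $W^k$ denotes the linear span of products of $k$ elements of $W$. *)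

theory Defs
  imports Complex_Main "HOL-Library.Extended_Real" "HOL-Library.Liminf_Limsup"
begin

definition K_algebra :: "('k::field \<Rightarrow> 'a::ring_1 \<Rightarrow> 'a) \<Rightarrow> bool" where
  "K_algebra scale \<longleftrightarrow> vector_space scale \<and>
     (\<forall>c x y. scale c (x * y) = scale c x * y \<and> scale c (x * y) = x * scale c y)"

definition fin_gen_algebra :: "('k::field \<Rightarrow> 'a::ring_1 \<Rightarrow> 'a) \<Rightarrow> bool" where
  "fin_gen_algebra scale \<longleftrightarrow>
     (\<exists>S. finite S \<and> module.span scale {prod_list xs | xs. set xs \<subseteq> S} = UNIV)"

definition fin_dim :: "('k::field \<Rightarrow> 'a::ring_1 \<Rightarrow> 'a) \<Rightarrow> 'a set \<Rightarrow> bool" where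
  "fin_dim scale W \<longleftrightarrow> (\<exists>B. finite B \<and> module.span scale B = W)"

text \<open>A filtration \<open>{V n}\<close>: subspaces, \<open>V 0 = 0\<close>, increasing, exhaustive,
  \<open>V n V m \<subseteq> V (n+m)\<close>, and \<open>V n / V (n-1)\<close> finite-dimensional.\<close>
definition filtration :: "('k::field \<Rightarrow> 'a::ring_1 \<Rightarrow> 'a) \<Rightarrow> (nat \<Rightarrow> 'a set) \<Rightarrow> bool" where
  "filtration scale V \<longleftrightarrow>
     (\<forall>n. module.subspace scale (V n)) \<and>
     V 0 = {0} \<and>
     (\<forall>n. V n \<subseteq> V (Suc n)) \<and>
     (\<Union>n. V n) = UNIV \<and>
     (\<forall>n m. \<forall>x\<in>V n. \<forall>y\<in>V m. x * y \<in> V (n + m)) \<and>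
     (\<forall>n. \<exists>B. finite B \<and> V (Suc n) \<subseteq> module.span scale (V n \<union> B))"

text \<open>dim (V n / V (n-1)) = dim V n - dim V (n-1) (all V n are finite-dimensional).\<close>
definition quot_dim :: "('k::field \<Rightarrow> 'a::ring_1 \<Rightarrow> 'a) \<Rightarrow> (nat \<Rightarrow> 'a set) \<Rightarrow> nat \<Rightarrow> nat" where
  "quot_dim scale V n = vector_space.dim scale (V n) - vector_space.dim scale (V (n - 1))"

definition h_alg :: "('k::field \<Rightarrow> 'a::ring_1 \<Rightarrow> 'a) \<Rightarrow> (nat \<Rightarrow> 'a set) \<Rightarrow> ereal" where
  "h_alg scale V =
     (if fin_dim scale (UNIV :: 'a set) then 0
      else limsup (\<lambda>n. if quot_dim scale V n = 0 then -\<infinity>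
                        else ereal (ln (real (quot_dim scale V n)) / real n)))"

definition subspace_pow :: "('k::field \<Rightarrow> 'a::ring_1 \<Rightarrow> 'a) \<Rightarrow> 'a set \<Rightarrow> nat \<Rightarrow> 'a set" where
  "subspace_pow scale W k =
     module.span scale {prod_list xs | xs. length xs = k \<and> set xs \<subseteq> W}"

end

theory Submission
  imports Defs "HOL-Real_Asymp.Real_Asymp"
begin

(* Write q n = dim (V n / V (n - 1)). For infinite-dimensional A, h_alg V = 0 says exactly that q
   grows subexponentially (for every e > 0, eventually q n \<le> exp (e n)); the limsup cannot be
   negative, since a filtration of an infinite-dimensional algebra has infinitely many nonzero
   quotients. Subexponential growth passes to the partial sums dim V n = q 0 + ... + q n, to the
   rescaled sequence n \<mapsto> dim V (n k), and to any smaller sequence. So whenever W n \<subseteq> V (n k),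
   dim (W n / W (n - 1)) \<le> dim W n \<le> dim V (n k) is subexponential and h_alg W = 0. Parts (1)
   and (2) are the cases k = 1 and W n = V (n k); for (3), the finite-dimensional W 1 lies in
   some V m, hence W n = W 1 ^ n \<subseteq> V (n m). *)

definition subexponential :: "(nat \<Rightarrow> real) \<Rightarrow> bool" where
  "subexponential f \<longleftrightarrow> (\<forall>e>0. \<forall>\<^sub>F n in sequentially. f n \<le> exp (e * real n))"

lemma subexponential_mono:
  assumes "subexponential g" and "\<And>n. f n \<le> g n"
  shows "subexponential f"
  using assms unfolding subexponential_def by (metis (no_types, lifting) eventually_mono order_trans)

lemma subexponential_comp_mult:
  assumes "subexponential f" and "0 < k"
  shows "subexponential (\<lambda>n. f (n * k))"
  unfolding subexponential_def
proof (intro allI impI)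
  fix e :: real assume "e > 0"
  with assms have "\<forall>\<^sub>F m in sequentially. f m \<le> exp (e / k * real m)"
    unfolding subexponential_def by (meson divide_pos_pos of_nat_0_less_iff)
  moreover have "filterlim (\<lambda>n. n * k) sequentially sequentially"
    using \<open>0 < k\<close> by (intro filterlim_subseq strict_monoI) simp
  ultimately have "\<forall>\<^sub>F n in sequentially. f (n * k) \<le> exp (e / k * real (n * k))"
    by (rule eventually_compose_filterlim)
  then show "\<forall>\<^sub>F n in sequentially. f (n * k) \<le> exp (e * real n)"
    using \<open>0 < k\<close> by simp
qed

lemma subexponential_partial_sums:
  assumes "subexponential f"
  shows "subexponential (\<lambda>n. \<Sum>i\<le>n. f i)"
  unfolding subexponential_def
proof (intro allI impI)
  fix e :: real assume "e > 0"
  then obtain N where N: "\<And>m. m \<ge> N \<Longrightarrow> f m \<le> exp (e / 2 * real m)"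
    using assms unfolding subexponential_def eventually_sequentially by (meson half_gt_zero)
  define M where "M = (\<Sum>i<N. f i)"
  have "(\<Sum>i\<le>n. f i) \<le> M + (real n + 1) * exp (e / 2 * real n)" if "n \<ge> N" for n
  proof -
    have "(\<Sum>i\<le>n. f i) = M + (\<Sum>i=N..n. f i)"
      unfolding M_def ivl_disj_un_one(4)[OF that, symmetric]
      by (simp add: sum.union_disjoint ivl_disj_int_one(4))
    also have "(\<Sum>i=N..n. f i) \<le> (\<Sum>i=N..n. exp (e / 2 * real n))"
    proof (intro sum_mono)
      fix i assume "i \<in> {N..n}"
      then have "f i \<le> exp (e / 2 * real i)" using N by simp
      also have "\<dots> \<le> exp (e / 2 * real n)" using \<open>i \<in> {N..n}\<close> \<open>e > 0\<close> by simp
      finally show "f i \<le> exp (e / 2 * real n)" .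
    qed
    also have "\<dots> \<le> (real n + 1) * exp (e / 2 * real n)"
      by simp
    finally show ?thesis by simp
  qed
  then have "\<forall>\<^sub>F n in sequentially. (\<Sum>i\<le>n. f i) \<le> M + (real n + 1) * exp (e / 2 * real n)"
    unfolding eventually_sequentially by blast
  moreover have "\<forall>\<^sub>F n in sequentially. M + (real n + 1) * exp (e / 2 * real n) \<le> exp (e * real n)"
    using \<open>e > 0\<close> by real_asymp
  ultimately show "\<forall>\<^sub>F n in sequentially. (\<Sum>i\<le>n. f i) \<le> exp (e * real n)"
    by eventually_elim simp
qed

definition log_growth :: "(nat \<Rightarrow> nat) \<Rightarrow> nat \<Rightarrow> ereal" where
  "log_growth a n = (if a n = 0 then -\<infinity> else ereal (ln (real (a n)) / real n))"

lemma h_alg_eq: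
  "h_alg scale V = (if fin_dim scale UNIV then 0 else limsup (log_growth (quot_dim scale V)))"
  unfolding h_alg_def log_growth_def by simp

lemma log_growth_le_iff:
  assumes "0 < n"
  shows "log_growth a n \<le> ereal e \<longleftrightarrow> real (a n) \<le> exp (e * real n)"
proof (cases "a n = 0")
  case False
  then have "real (a n) \<le> exp (e * real n) \<longleftrightarrow> ln (real (a n)) \<le> e * real n"
    by (metis exp_le_cancel_iff exp_ln of_nat_0_less_iff gr0I)
  with False assms show ?thesis
    by (simp add: log_growth_def divide_le_eq mult.commute)
qed (simp add: log_growth_def)

lemma limsup_log_growth_le_0_iff:
  "limsup (log_growth a) \<le> 0 \<longleftrightarrow> subexponential (\<lambda>n. real (a n))"
proof
  assume le: "limsup (log_growth a) \<le> 0"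
  show "subexponential (\<lambda>n. real (a n))"
    unfolding subexponential_def
  proof (intro allI impI)
    fix e :: real assume "e > 0"
    with le have "limsup (log_growth a) < ereal e" by (simp add: le_less_trans)
    then have "\<forall>\<^sub>F n in sequentially. log_growth a n < ereal e" by (rule Limsup_lessD)
    with eventually_gt_at_top[of 0]
    show "\<forall>\<^sub>F n in sequentially. real (a n) \<le> exp (e * real n)"
      by eventually_elim (simp add: log_growth_le_iff[symmetric])
  qed
next
  assume subexp: "subexponential (\<lambda>n. real (a n))"
  show "limsup (log_growth a) \<le> 0"
  proof (rule ereal_le_epsilon2)
    fix e :: real assume "0 < e"
    with subexp have "\<forall>\<^sub>F n in sequentially. real (a n) \<le> exp (e * real n)"
      unfolding subexponential_def by blast
    with eventually_gt_at_top[of 0]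
    have "\<forall>\<^sub>F n in sequentially. log_growth a n \<le> ereal e"
      by eventually_elim (simp add: log_growth_le_iff)
    then show "limsup (log_growth a) \<le> 0 + ereal e"
      by (simp add: Limsup_bounded)
  qed
qed

lemma limsup_log_growth_nonneg:
  assumes "\<exists>\<^sub>F n in sequentially. a n \<noteq> 0"
  shows "0 \<le> limsup (log_growth a)"
proof (rule ccontr)
  assume "\<not> 0 \<le> limsup (log_growth a)"
  then have "\<forall>\<^sub>F n in sequentially. log_growth a n < 0"
    by (intro Limsup_lessD) simp
  then have "\<forall>\<^sub>F n in sequentially. a n = 0"
  proof eventually_elim
    case (elim n)
    show "a n = 0"
    proof (rule ccontr)
      assume "a n \<noteq> 0"
      then have "0 \<le> ln (real (a n)) / real n" by simp
      with elim \<open>a n \<noteq> 0\<close> show False by (simp add: log_growth_def)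
    qed
  qed
  with assms show False by (simp add: frequently_def)
qed

context vector_space
begin

lemma finite_independent_card_le_dim:
  assumes "finite C" "T \<subseteq> span C" "independent B" "B \<subseteq> T"
  shows "finite B \<and> card B \<le> dim T"
proof -
  obtain D where D: "D \<subseteq> T" "independent D" "T \<subseteq> span D" "card D = dim T"
    using basis_exists by blast
  have "finite D" using independent_span_bound[OF assms(1) D(2)] D(1) assms(2) by blast
  then show ?thesis using independent_span_bound[of D B] assms(3,4) D by auto
qed

lemma dim_mono_finite_span:
  assumes "finite C" "T \<subseteq> span C" "S \<subseteq> T"
  shows "dim S \<le> dim T"
proof -
  obtain A where A: "A \<subseteq> S" "independent A" "card A = dim S"
    using basis_exists by metis
  then show ?thesis
    using finite_independent_card_le_dim[OF assms(1,2) A(2)] assms(3) by auto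
qed

lemma finite_span_subspace:
  assumes "finite C" "T \<subseteq> span C" "subspace S" "S \<subseteq> T"
  obtains A where "finite A" "span A = S"
proof -
  obtain A where A: "A \<subseteq> S" "independent A" "S \<subseteq> span A"
    using maximal_independent_subset[of S] by blast
  have "span A = S" using A span_minimal[OF A(1) assms(3)] by blast
  then show ?thesis
    using that finite_independent_card_le_dim[OF assms(1,2) A(2)] A(1) assms(4) by blast
qed

lemma subspace_eq_if_dim_le:
  assumes "finite C" "T \<subseteq> span C" "subspace S" "S \<subseteq> T" "dim T \<le> dim S"
  shows "S = T"
proof (rule ccontr)
  assume "S \<noteq> T"
  then obtain x where x: "x \<in> T" "x \<notin> S" using assms(4) by blast
  obtain A where A: "A \<subseteq> S" "independent A" "S \<subseteq> span A" "card A = dim S"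
    using basis_exists by blast
  have "x \<notin> span A" using x span_minimal[OF A(1) assms(3)] by blast
  then have "independent (insert x A)" using A(2) by (rule independent_insertI)
  moreover have "insert x A \<subseteq> T" using x(1) A(1) assms(4) by blast
  ultimately have "finite (insert x A) \<and> card (insert x A) \<le> dim T"
    by (rule finite_independent_card_le_dim[OF assms(1,2)])
  moreover have "x \<notin> A" using x A(1) by blast
  ultimately show False using A(4) assms(5) by (auto simp: card_insert_if)
qed

end

lemma
  assumes "filtration scale V"
  shows filtration_subspace: "module.subspace scale (V n)"
    and filtration_0: "V 0 = {0}"
    and filtration_Suc: "V n \<subseteq> V (Suc n)"
    and filtration_exhaustive: "\<exists>n. x \<in> V n"
    and filtration_mult: "x \<in> V n \<Longrightarrow> y \<in> V m \<Longrightarrow> x * y \<in> V (n + m)"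
    and filtration_finite_quotient: "\<exists>B. finite B \<and> V (Suc n) \<subseteq> module.span scale (V n \<union> B)"
  using assms unfolding filtration_def by auto

lemma filtration_mono:
  assumes "filtration scale V" "m \<le> n"
  shows "V m \<subseteq> V n"
  using lift_Suc_mono_le[of V, OF filtration_Suc[OF assms(1)] assms(2)] .

lemma filtration_fin_dim:
  assumes vs: "vector_space scale" and V: "filtration scale V"
  shows "fin_dim scale (V n)"
proof (induction n)
  interpret vector_space scale by fact
  case 0
  show ?case
    unfolding fin_dim_def filtration_0[OF V] by (metis finite.emptyI span_empty)
next
  interpret vector_space scale by fact
  case (Suc n)
  obtain C where C: "finite C" "span C = V n" using Suc unfolding fin_dim_def by blast
  obtain B where B: "finite B" "V (Suc n) \<subseteq> span (V n \<union> B)"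
    using filtration_finite_quotient[OF V] by blast
  have "span (V n \<union> B) = span (C \<union> B)"
    unfolding C(2)[symmetric] by (simp add: span_Un span_span)
  with B obtain A where "finite A" "span A = V (Suc n)"
    using finite_span_subspace[of "C \<union> B" "V (Suc n)" "V (Suc n)"] C(1) filtration_subspace[OF V]
    by auto
  then show ?case unfolding fin_dim_def by blast
qed

lemma filtration_rescale:
  assumes vs: "vector_space scale" and V: "filtration scale V" and "0 < k"
  shows "filtration scale (\<lambda>n. V (n * k))"
proof -
  interpret vector_space scale by fact
  have "\<exists>B. finite B \<and> V (Suc n * k) \<subseteq> span (V (n * k) \<union> B)" for n
  proof -
    obtain B where "finite B" "span B = V (Suc n * k)"
      using filtration_fin_dim[OF vs V] unfolding fin_dim_def by blast
    then show ?thesis by (metis span_mono sup_ge2)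
  qed
  moreover have "x \<in> (\<Union>n. V (n * k))" for x
  proof -
    obtain m where "x \<in> V m" using filtration_exhaustive[OF V] by blast
    then have "x \<in> V (m * k)" using filtration_mono[OF V, of m "m * k"] \<open>0 < k\<close> by auto
    then show ?thesis by blast
  qed
  moreover have "x * y \<in> V ((n + m) * k)" if "x \<in> V (n * k)" "y \<in> V (m * k)" for x y n m
    using filtration_mult[OF V that] by (simp add: add_mult_distrib)
  moreover have "V (n * k) \<subseteq> V (Suc n * k)" for n
    using filtration_mono[OF V] by simp
  ultimately show ?thesis
    unfolding filtration_def using filtration_subspace[OF V] filtration_0[OF V] by auto
qed

(* Without xs \<noteq> [] this fails: the empty product 1 need not lie in V 0 = {0}. *)
lemma filtration_prod_list_mem:
  assumes V: "filtration scale V"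
  shows "xs \<noteq> [] \<Longrightarrow> set xs \<subseteq> V m \<Longrightarrow> prod_list xs \<in> V (length xs * m)"
proof (induction xs)
  case (Cons x xs)
  show ?case
  proof (cases "xs = []")
    case False
    with Cons have "x \<in> V m" "prod_list xs \<in> V (length xs * m)" by simp_all
    then show ?thesis using filtration_mult[OF V] by fastforce
  qed (use Cons in simp)
qed simp

lemma subspace_pow_subset_filtration:
  assumes "vector_space scale" and V: "filtration scale V" and "0 < k" "U \<subseteq> V m"
  shows "subspace_pow scale U k \<subseteq> V (k * m)"
proof -
  interpret vector_space scale by fact
  have "prod_list xs \<in> V (k * m)" if "length xs = k" "set xs \<subseteq> U" for xs
    using filtration_prod_list_mem[OF V, of xs m] that assms(3,4) by auto
  then show ?thesis
    unfolding subspace_pow_def by (intro span_minimal filtration_subspace[OF V]) auto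
qed

lemma fin_dim_subset_filtration:
  assumes "vector_space scale" and V: "filtration scale V" and "fin_dim scale U"
  obtains m where "0 < m" "U \<subseteq> V m"
proof -
  interpret vector_space scale by fact
  obtain C where C: "finite C" "span C = U" using assms(3) unfolding fin_dim_def by blast
  have "\<exists>m. C \<subseteq> V m"
    using C(1)
  proof (induction rule: finite_induct)
    case (insert c C)
    then obtain m where "C \<subseteq> V m" by blast
    moreover obtain m' where "c \<in> V m'" using filtration_exhaustive[OF V] by blast
    ultimately have "insert c C \<subseteq> V (max m m')"
      using filtration_mono[OF V, of m "max m m'"] filtration_mono[OF V, of m' "max m m'"]
      by auto
    then show ?case by blast
  qed simp
  then obtain m where "C \<subseteq> V m" by blast
  then have "C \<subseteq> V (Suc m)" using filtration_mono[OF V, of m "Suc m"] by simp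
  then have "U \<subseteq> V (Suc m)"
    unfolding C(2)[symmetric] by (intro span_minimal filtration_subspace[OF V])
  then show ?thesis using that by blast
qed

lemma dim_filtration_eq_sum_quot_dim:
  assumes vs: "vector_space scale" and V: "filtration scale V"
  shows "vector_space.dim scale (V n) = (\<Sum>i\<le>n. quot_dim scale V i)"
proof (induction n)
  interpret vector_space scale by fact
  case 0
  show ?case
    by (simp add: quot_dim_def filtration_0[OF V] dim_eq_card_independent independent_empty
        flip: span_empty)
next
  interpret vector_space scale by fact
  case (Suc n)
  obtain C where "finite C" "span C = V (Suc n)"
    using filtration_fin_dim[OF vs V] unfolding fin_dim_def by blast
  then have "dim (V n) \<le> dim (V (Suc n))"
    using dim_mono_finite_span[of C "V (Suc n)" "V n"] filtration_Suc[OF V] by simp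
  with Suc show ?case by (simp add: quot_dim_def)
qed

lemma frequently_quot_dim_nonzero:
  assumes vs: "vector_space scale" and W: "filtration scale W"
    and infinite_dim: "\<not> fin_dim scale UNIV"
  shows "\<exists>\<^sub>F n in sequentially. quot_dim scale W n \<noteq> 0"
proof (rule ccontr)
  interpret vector_space scale by fact
  assume "\<not> ?thesis"
  then obtain N where N: "\<And>n. n \<ge> N \<Longrightarrow> quot_dim scale W n = 0"
    by (auto simp: not_frequently eventually_sequentially)
  have stable: "W n = W N" if "n \<ge> N" for n
    using that
  proof (induction n rule: dec_induct)
    case (step n)
    obtain C where "finite C" "span C = W (Suc n)"
      using filtration_fin_dim[OF vs W] unfolding fin_dim_def by blast
    moreover have "dim (W (Suc n)) \<le> dim (W n)"
      using N[of "Suc n"] \<open>N \<le> n\<close> by (simp add: quot_dim_def)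
    ultimately have "W n = W (Suc n)"
      using subspace_eq_if_dim_le[of C "W (Suc n)" "W n"] filtration_subspace[OF W] filtration_Suc[OF W]
      by simp
    with step show ?case by simp
  qed simp
  have "x \<in> W N" for x
  proof -
    obtain m where "x \<in> W m" using filtration_exhaustive[OF W] by blast
    then have "x \<in> W (max m N)" using filtration_mono[OF W, of m "max m N"] by auto
    then show ?thesis using stable[of "max m N"] by simp
  qed
  then have "W N = UNIV" by blast
  with filtration_fin_dim[OF vs W, of N] infinite_dim show False by simp
qed

lemma h_alg_eq_0_if_subset_rescaled:
  assumes vs: "vector_space scale" and V: "filtration scale V" and h0: "h_alg scale V = 0"
    and W: "filtration scale W" and "0 < k" and sub: "\<And>n. W n \<subseteq> V (n * k)"
  shows "h_alg scale W = 0"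
proof (cases "fin_dim scale UNIV")
  case True
  then show ?thesis by (simp add: h_alg_def)
next
  case False
  interpret vector_space scale by fact
  have "subexponential (\<lambda>n. real (quot_dim scale V n))"
    using h0 False limsup_log_growth_le_0_iff[of "quot_dim scale V"] by (simp add: h_alg_eq)
  then have "subexponential (\<lambda>n. real (dim (V n)))"
    using subexponential_partial_sums
    by (simp add: dim_filtration_eq_sum_quot_dim[OF vs V])
  then have "subexponential (\<lambda>n. real (dim (V (n * k))))"
    using \<open>0 < k\<close> by (rule subexponential_comp_mult)
  moreover have "real (quot_dim scale W n) \<le> real (dim (V (n * k)))" for n
  proof -
    obtain C where "finite C" "span C = V (n * k)"
      using filtration_fin_dim[OF vs V] unfolding fin_dim_def by blast
    then have "dim (W n) \<le> dim (V (n * k))"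
      using dim_mono_finite_span[of C "V (n * k)" "W n"] sub[of n] by simp
    then show ?thesis by (simp add: quot_dim_def)
  qed
  ultimately have "subexponential (\<lambda>n. real (quot_dim scale W n))"
    by (rule subexponential_mono)
  then have "limsup (log_growth (quot_dim scale W)) \<le> 0"
    by (simp add: limsup_log_growth_le_0_iff)
  moreover have "0 \<le> limsup (log_growth (quot_dim scale W))"
    by (rule limsup_log_growth_nonneg[OF frequently_quot_dim_nonzero[OF vs W False]])
  ultimately show ?thesis using False by (simp add: h_alg_eq)
qed

lemma generated_filtration_subset_rescaled:
  assumes vs: "vector_space scale" and V: "filtration scale V" and W: "filtration scale W"
    and "fin_dim scale (W 1)" and pow: "\<forall>k\<ge>1. W k = subspace_pow scale (W 1) k"
  obtains m where "0 < m" "\<And>n. W n \<subseteq> V (n * m)"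
proof -
  obtain m where "0 < m" "W 1 \<subseteq> V m"
    using fin_dim_subset_filtration[OF vs V \<open>fin_dim scale (W 1)\<close>] by blast
  have sub: "W n \<subseteq> V (n * m)" for n
  proof (cases "n = 0")
    case True
    interpret vector_space scale by fact
    show ?thesis
      using True subspace_0[OF filtration_subspace[OF V]] by (simp add: filtration_0[OF W])
  next
    case False
    then have "n \<ge> 1" by simp
    with pow have "W n = subspace_pow scale (W 1) n" by blast
    also have "\<dots> \<subseteq> V (n * m)"
      using subspace_pow_subset_filtration[OF vs V _ \<open>W 1 \<subseteq> V m\<close>] False by blast
    finally show ?thesis .
  qed
  show ?thesis by (rule that[OF \<open>0 < m\<close> sub])
qed

theorem proposition3p4:
  fixes scale :: "'k::field \<Rightarrow> 'a::ring_1 \<Rightarrow> 'a"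
    and V :: "nat \<Rightarrow> 'a set"
  assumes alg: "K_algebra scale"
    and fg: "fin_gen_algebra scale"
    and filtV: "filtration scale V"
    and h0: "h_alg scale V = 0"
  shows "(\<forall>W. filtration scale W \<and> (\<forall>n. W n \<subseteq> V n) \<longrightarrow> h_alg scale W = 0)
       \<and> (\<forall>k::nat. k \<ge> 1 \<longrightarrow> h_alg scale (\<lambda>n. V (n * k)) = 0)
       \<and> (\<forall>W. filtration scale W \<and> fin_dim scale (W 1) \<and>
              (\<forall>k\<ge>1. W k = subspace_pow scale (W 1) k) \<longrightarrow> h_alg scale W = 0)"
proof -
  have vs: "vector_space scale" using alg unfolding K_algebra_def by blast
  note dominated = h_alg_eq_0_if_subset_rescaled[OF vs filtV h0]
  have "h_alg scale W = 0" if "filtration scale W" "\<forall>n. W n \<subseteq> V n" for W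
    using dominated[OF that(1), of 1] that(2) by simp
  moreover have "h_alg scale (\<lambda>n. V (n * k)) = 0" if "k \<ge> 1" for k
    using dominated[OF filtration_rescale[OF vs filtV, of k], of k] that by simp
  moreover have "h_alg scale W = 0"
    if W: "filtration scale W" "fin_dim scale (W 1)" "\<forall>k\<ge>1. W k = subspace_pow scale (W 1) k" for W
  proof -
    obtain m where "0 < m" "\<And>n. W n \<subseteq> V (n * m)"
      using generated_filtration_subset_rescaled[OF vs filtV W] by blast
    then show ?thesis by (rule dominated[OF W(1)])
  qed
  ultimately show ?thesis by blast
qed

end
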